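(* Let $R_{\max}$ be the relation "is bisimilar to" on the state space $E$ of a Feller-Dynkin process, i.e. $R_{\max}=\bigcup\{R : R \text{ is a bisimulation on } E\}$. Then $R_{\max}$ is a bisimulation, and hence it is the greatest bisimulation on $E$.
   Context: Let $E$ be a locally compact Hausdorff space with countable base, equipped with its Borel $\sigma$-algebra $\mathcal{E}$, and let $E_\partial = E \uplus \{\partial\}$ be its one-point compactification. A Feller-Dynkin semigroup is a strongly continuous semigroup $(\hat P_t)_{t\ge 0}$ of linear operators on $C_0(E)$ such that $0\le f\le 1$ implies $0\le \hat P_t f\le 1$; it determines sub-Markov kernels $P_t$ on $E$ with $\hat P_t f(x)=\int f(y)P_t(x,dy)$. A trajectory is a cadlag map $\omega:[0,\infty)\to E_\partial$ such that if $\omega(t-)=\partial$ or $\omega(t)=\partial$ then $\omega(u)=\partial$ for all $u\ge t$. Let $\Omega$ be the set of trajectories, $X_t(\omega)=\omega(t)$, $\mathcal{G}=\sigma(X_s : s\ge 0)$, and for $x\in E_\partial$ let $\mathbb{P}^x$ be the unique probability measure on $(\Omega,\mathcal{G})$ with $\mathbb{P}^x(X_0\in dx_0, X_{t_1}\in dx_1,\dots,X_{t_n}\in dx_n)=\delta_x(dx_0)P^{+\partial}_{t_1}(x_0,dx_1)\cdots P^{+\partial}_{t_n-t_{n-1}}(x_{n-1},dx_n)$ for all $0\le t_1\le\dots\le t_n$, where $P^{+\partial}_t(x,\{\partial\})=1-P_t(x,E)$ and $P^{+\partial}_t(\partial,\{\partial\})=1$. The process is equipped with $obs:E\to 2^{AP}$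 for a finite set $AP$ of atomic propositions, extended by $obs(\partial)=\partial$. An equivalence relation $R$ on $E$ is a bisimulation if whenever $x\,R\,y$: (i) $obs(x)=obs(y)$, and (ii) for every $R$-closed set $B\in\mathcal{G}$, $\mathbb{P}^x(B)=\mathbb{P}^y(B)$, where $B$ is $R$-closed if for every $\omega\in B$ and every trajectory $\omega'$ with $\omega(t)\,R\,\omega'(t)$ for all $t\ge 0$ ($\partial$ related to itself), $\omega'\in B$. Two states are bisimilar if some bisimulation relates them. *)

theory Defs
  imports "HOL-Probability.Probability"
begin

text \<open>State space E is a type 'a with a second countable Hausdorff topology (locally
compactness is assumed in the theorem). The one-point compactification E_\<partial> is
'a option, with None playing the role of the cemetery point \<partial>.\<close>

definition c0 :: "('a::topological_space \<Rightarrow> real) \<Rightarrow> bool" where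
  "c0 f \<longleftrightarrow> continuous_on UNIV f \<and>
     (\<forall>e>0. \<exists>K. compact K \<and> (\<forall>x. x \<notin> K \<longrightarrow> \<bar>f x\<bar> < e))"

definition feller_dynkin ::
  "(real \<Rightarrow> ('a::topological_space \<Rightarrow> real) \<Rightarrow> ('a \<Rightarrow> real)) \<Rightarrow> bool" where
  "feller_dynkin Ph \<longleftrightarrow>
     (\<forall>t\<ge>0. \<forall>f. c0 f \<longrightarrow> c0 (Ph t f)) \<and>
     (\<forall>t\<ge>0. \<forall>f g a b. c0 f \<longrightarrow> c0 g \<longrightarrow>
        Ph t (\<lambda>x. a * f x + b * g x) = (\<lambda>x. a * Ph t f x + b * Ph t g x)) \<and>
     (\<forall>f. c0 f \<longrightarrow> Ph 0 f = f) \<and>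
     (\<forall>s\<ge>0. \<forall>t\<ge>0. \<forall>f. c0 f \<longrightarrow> Ph (s + t) f = Ph s (Ph t f)) \<and>
     (\<forall>f. c0 f \<longrightarrow> (\<forall>s\<ge>0. \<forall>e>0. \<exists>d>0. \<forall>t\<ge>0. \<bar>t - s\<bar> < d \<longrightarrow>
        (\<forall>x. \<bar>Ph t f x - Ph s f x\<bar> \<le> e))) \<and>
     (\<forall>t\<ge>0. \<forall>f. c0 f \<longrightarrow> (\<forall>x. 0 \<le> f x \<and> f x \<le> 1) \<longrightarrow>
        (\<forall>x. 0 \<le> Ph t f x \<and> Ph t f x \<le> 1))"

text \<open>The sub-Markov kernels P_t determined by the semigroup (Riesz representation).\<close>
definition kernels_of ::
  "(real \<Rightarrow> ('a::topological_space \<Rightarrow> real) \<Rightarrow> ('a \<Rightarrow> real)) \<Rightarrow>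
   (real \<Rightarrow> 'a \<Rightarrow> 'a measure) \<Rightarrow> bool" where
  "kernels_of Ph P \<longleftrightarrow>
     (\<forall>t\<ge>0. \<forall>x. subprob_space (P t x) \<and> sets (P t x) = sets borel \<and>
        (\<forall>f. c0 f \<longrightarrow> Ph t f x = (\<integral>y. f y \<partial>(P t x))))"

definition borel_dp :: "'a::topological_space option measure" where
  "borel_dp = sigma UNIV {S. Some -` S \<in> sets borel}"

text \<open>Convergence in the Alexandroff one-point compactification topology:
neighbourhoods of Some a are the images of open neighbourhoods of a, neighbourhoods
of None are the complements of images of compact sets.\<close>
definition tends_dp :: "('b \<Rightarrow> 'a::topological_space option) \<Rightarrow> 'a option \<Rightarrow> 'b filter \<Rightarrow> bool" where
  "tends_dp w l F \<longleftrightarrow>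
     (case l of
        Some a \<Rightarrow> (\<forall>U. open U \<longrightarrow> a \<in> U \<longrightarrow> eventually (\<lambda>s. w s \<in> Some ` U) F)
      | None \<Rightarrow> (\<forall>K. compact K \<longrightarrow> eventually (\<lambda>s. w s \<notin> Some ` K) F))"

text \<open>Trajectories, as functions on the reals; convention: w t = None for t < 0.\<close>
definition traj :: "(real \<Rightarrow> 'a::topological_space option) set" where
  "traj = {w. (\<forall>t<0. w t = None) \<and>
               (\<forall>t\<ge>0. tends_dp w (w t) (at_right t)) \<and>
               (\<forall>t>0. \<exists>l. tends_dp w l (at_left t)) \<and>
               (\<forall>t\<ge>0. ((\<forall>l. tends_dp w l (at_left t) \<longrightarrow> l = None) \<and> t > 0
                          \<or> w t = None) \<longrightarrow> (\<forall>u\<ge>t. w u = None))}"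

definition G_alg :: "(real \<Rightarrow> 'a::topological_space option) measure" where
  "G_alg = sigma traj {{w \<in> traj. w s \<in> A} | s A. 0 \<le> s \<and> A \<in> sets borel_dp}"

definition Pdp :: "(real \<Rightarrow> 'a \<Rightarrow> 'a measure) \<Rightarrow> real \<Rightarrow> 'a option \<Rightarrow>
                   'a::topological_space option measure" where
  "Pdp P t y = (case y of
      None \<Rightarrow> return borel_dp None
    | Some x \<Rightarrow> measure_of UNIV (sets borel_dp)
        (\<lambda>S. emeasure (P t x) (Some -` S) +
             (if None \<in> S then 1 - emeasure (P t x) UNIV else 0)))"

fun fdd_iter :: "(real \<Rightarrow> 'b \<Rightarrow> 'b measure) \<Rightarrow> 'b \<Rightarrow> (real \<times> 'b set) list \<Rightarrow> ennreal" where
  "fdd_iter K y [] = 1"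
| "fdd_iter K y ((d, A) # r) = (\<integral>\<^sup>+ z. indicator A z * fdd_iter K z r \<partial>(K d y))"

definition process_law ::
  "(real \<Rightarrow> 'a \<Rightarrow> 'a measure) \<Rightarrow> ('a::topological_space option \<Rightarrow> (real \<Rightarrow> 'a option) measure) \<Rightarrow> bool" where
  "process_law P Pr \<longleftrightarrow>
     (\<forall>x. prob_space (Pr x) \<and> sets (Pr x) = sets G_alg \<and>
        (\<forall>A0 ts As. A0 \<in> sets borel_dp \<longrightarrow> set As \<subseteq> sets borel_dp \<longrightarrow>
           length As = length ts \<longrightarrow> sorted ts \<longrightarrow> (\<forall>t\<in>set ts. 0 \<le> t) \<longrightarrow>
           emeasure (Pr x) {w \<in> traj. w 0 \<in> A0 \<and> (\<forall>i<length ts. w (ts ! i) \<in> As ! i)}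
             = indicator A0 x * fdd_iter (Pdp P) x (zip (map2 (-) ts (0 # ts)) As)))"

definition rel_dp :: "('a \<times> 'a) set \<Rightarrow> 'a option \<Rightarrow> 'a option \<Rightarrow> bool" where
  "rel_dp R u v \<longleftrightarrow> (case (u, v) of
      (None, None) \<Rightarrow> True
    | (Some a, Some b) \<Rightarrow> (a, b) \<in> R
    | _ \<Rightarrow> False)"

definition R_closed :: "('a::topological_space \<times> 'a) set \<Rightarrow> (real \<Rightarrow> 'a option) set \<Rightarrow> bool" where
  "R_closed R B \<longleftrightarrow>
     (\<forall>w\<in>B. \<forall>w'\<in>traj. (\<forall>t\<ge>0. rel_dp R (w t) (w' t)) \<longrightarrow> w' \<in> B)"

definition bisimulation ::
  "('a \<Rightarrow> 'p set) \<Rightarrow> ('a::topological_space option \<Rightarrow> (real \<Rightarrow> 'a option) measure) \<Rightarrow>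
   ('a \<times> 'a) set \<Rightarrow> bool" where
  "bisimulation obs Pr R \<longleftrightarrow> equiv UNIV R \<and>
     (\<forall>(x, y)\<in>R. obs x = obs y \<and>
        (\<forall>B\<in>sets G_alg. R_closed R B \<longrightarrow> emeasure (Pr (Some x)) B = emeasure (Pr (Some y)) B))"

end

theory Submission
  imports Defs
begin

text \<open>A set closed under a relation is closed under every smaller relation. Hence each step of
a chain of pairs related by some bisimulation preserves the laws of the sets closed under the
equivalence generated by all bisimulations, and that equivalence is itself a bisimulation. It
contains every bisimulation, so it equals their union. Nothing here uses the Feller-Dynkin
structure: the argument works for any family of laws indexed by the states.\<close>

lemma rel_dp_mono: "R \<subseteq> S \<Longrightarrow> rel_dp R u v \<Longrightarrow> rel_dp S u v"
  unfolding rel_dp_def by (auto split: option.splits)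

lemma R_closed_antimono: "R \<subseteq> S \<Longrightarrow> R_closed S B \<Longrightarrow> R_closed R B"
  unfolding R_closed_def using rel_dp_mono by blast

lemma bisimulation_rtrancl_Union:
  assumes bisims: "\<forall>R\<in>F. bisimulation obs Pr R"
  shows "bisimulation obs Pr ((\<Union>F)\<^sup>*)"
proof -
  let ?S = "(\<Union>F)\<^sup>*"
  have "sym (\<Union>F)"
    using bisims unfolding sym_def bisimulation_def equiv_def by blast
  then have equiv: "equiv UNIV ?S"
    unfolding equiv_def by (auto simp: refl_rtrancl trans_rtrancl sym_rtrancl)
  have "obs x = obs y \<and>
      (\<forall>B\<in>sets G_alg. R_closed ?S B \<longrightarrow> emeasure (Pr (Some x)) B = emeasure (Pr (Some y)) B)"
    if "(x, y) \<in> ?S" for x y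
    using that
  proof (induction rule: rtrancl_induct)
    case base
    then show ?case by simp
  next
    case (step y z)
    then obtain R where R: "R \<in> F" "(y, z) \<in> R"
      by blast
    then have "obs y = obs z \<and>
        (\<forall>B\<in>sets G_alg. R_closed R B \<longrightarrow> emeasure (Pr (Some y)) B = emeasure (Pr (Some z)) B)"
      using bisims unfolding bisimulation_def by blast
    moreover have "R \<subseteq> ?S"
      using R(1) by blast
    ultimately show ?case
      using step.IH R_closed_antimono by metis
  qed
  with equiv show ?thesis
    unfolding bisimulation_def by blast
qed

theorem mainTheorem2:
  fixes Ph :: "real \<Rightarrow> ('a::{t2_space, second_countable_topology} \<Rightarrow> real) \<Rightarrow> ('a \<Rightarrow> real)"
    and P :: "real \<Rightarrow> 'a \<Rightarrow> 'a measure"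
    and Pr :: "'a option \<Rightarrow> (real \<Rightarrow> 'a option) measure"
    and AP :: "'p set"
    and obs :: "'a \<Rightarrow> 'p set"
  assumes "locally_compact_space (euclidean :: 'a topology)"
    and "feller_dynkin Ph"
    and "kernels_of Ph P"
    and "process_law P Pr"
    and "finite AP"
    and "\<forall>x. obs x \<subseteq> AP"
  defines "Rmax \<equiv> \<Union>{R. bisimulation obs Pr R}"
  shows "bisimulation obs Pr Rmax \<and> (\<forall>R. bisimulation obs Pr R \<longrightarrow> R \<subseteq> Rmax)"
proof -
  have closure_bisim: "bisimulation obs Pr (Rmax\<^sup>*)"
    unfolding Rmax_def by (rule bisimulation_rtrancl_Union) simp
  then have "Rmax\<^sup>* \<subseteq> Rmax"
    unfolding Rmax_def by blast
  then have "Rmax\<^sup>* = Rmax"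
    by auto
  with closure_bisim show ?thesis
    unfolding Rmax_def by auto
qed

end
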